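(* Let $\mathcal{I}$ be an ideal on $\omega$. If $\mathcal{ED}\le_{\mathrm{K}}\mathcal{I}$, then Player II has a winning strategy in the tallness* game with respect to $\mathcal{I}$.
   Context: Ideals on $\omega$ are assumed to contain all finite sets; $\mathcal{I}^+=\mathcal{P}(\omega)\setminus\mathcal{I}$. $\mathcal{ED}$ is the ideal on $\omega\times\omega$ generated by the vertical lines $\{n\}\times\omega$ and the graphs of functions from $\omega$ to $\omega$. For ideals $\mathcal{J}$ on $X$ and $\mathcal{I}$ on $Y$, $\mathcal{J}\le_{\mathrm{K}}\mathcal{I}$ (Katětov order) means there is a function $f:Y\to X$ with $f^{-1}(J)\in\mathcal{I}$ for every $J\in\mathcal{J}$. Tallness* game with respect to $\mathcal{I}$: at round $k$, Player I plays $n_k\in\omega$ with $n_0<n_1<\cdots$, then Player II plays $i_k\in\{0,1\}$. Player II wins iff either $\{n_k:k\in\omega\}\in\mathcal{I}$, or ($\{n_k:k\in\omega\}\in\mathcal{I}^+$ and $\{n_k:i_k=1\}$ is infinite and belongs to $\mathcal{I}$). *)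

theory Defs
  imports Main
begin

definition is_ideal :: "'a set set \<Rightarrow> bool" where
  "is_ideal I \<longleftrightarrow>
     (\<forall>A. finite A \<longrightarrow> A \<in> I) \<and>
     (\<forall>A B. A \<in> I \<longrightarrow> B \<subseteq> A \<longrightarrow> B \<in> I) \<and>
     (\<forall>A B. A \<in> I \<longrightarrow> B \<in> I \<longrightarrow> A \<union> B \<in> I) \<and>
     UNIV \<notin> I"

definition ED :: "(nat \<times> nat) set set" where
  "ED = {A. \<exists>N F. finite N \<and> finite F \<and>
            A \<subseteq> (\<Union>n\<in>N. {n} \<times> UNIV) \<union> (\<Union>f\<in>F. {(m, f m) | m. True})}"

definition katetov_le :: "'x set set \<Rightarrow> 'y set set \<Rightarrow> bool" where
  "katetov_le J I \<longleftrightarrow> (\<exists>f :: 'y \<Rightarrow> 'x. \<forall>A\<in>J. f -` A \<in> I)"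

(* Player I plays a strictly increasing sequence n_0 < n_1 < ...;
   Player II answers i_k \<in> {0,1}, encoded as a bool (True = 1).
   A strategy of Player II maps the list [n_0,...,n_k] of Player I's moves so far
   to the answer i_k (II's own earlier moves are determined by the strategy). *)
definition tallness_star_II_wins :: "nat set set \<Rightarrow> (nat \<Rightarrow> nat) \<Rightarrow> (nat \<Rightarrow> bool) \<Rightarrow> bool" where
  "tallness_star_II_wins I n i \<longleftrightarrow>
     range n \<in> I \<or>
     (range n \<notin> I \<and> infinite {n k | k. i k} \<and> {n k | k. i k} \<in> I)"

definition II_winning_strategy_tallness_star :: "nat set set \<Rightarrow> (nat list \<Rightarrow> bool) \<Rightarrow> bool" where
  "II_winning_strategy_tallness_star I \<sigma> \<longleftrightarrow>
     (\<forall>n :: nat \<Rightarrow> nat. strict_mono n \<longrightarrow>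
        tallness_star_II_wins I n (\<lambda>k. \<sigma> (map n [0..<Suc k])))"

end

theory Submission
  imports Defs
begin

text \<open>Let \<open>f\<close> witness \<open>ED \<le>\<^sub>K I\<close>. Player II answers 1 exactly when the first coordinate
  of \<open>f(n\<^sub>k)\<close> has not occurred before. Then \<open>f\<close> is injective in the first coordinate on
  the answered moves, so their image lies in a graph and they form a set in \<open>I\<close>. If only
  finitely many moves were answered, every \<open>f(n\<^sub>k)\<close> lies in finitely many vertical
  lines, so the whole play is in \<open>I\<close>.\<close>

lemma is_ideal_subset: "is_ideal I \<Longrightarrow> A \<in> I \<Longrightarrow> B \<subseteq> A \<Longrightarrow> B \<in> I"
  unfolding is_ideal_def by blast

lemma inj_on_fst_in_ED:
  assumes "inj_on fst P"
  shows "P \<in> ED"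
proof -
  define g where "g m = (SOME y. (m, y) \<in> P)" for m
  have "P \<subseteq> {(m, g m) | m. True}"
  proof
    fix p assume p: "p \<in> P"
    obtain m y where p_eq: "p = (m, y)" by fastforce
    have "(m, g m) \<in> P"
      unfolding g_def using p p_eq by (auto intro: someI)
    then have "(m, g m) = p"
      using inj_onD[OF assms _ _ p] p_eq by fastforce
    then show "p \<in> {(m, g m) | m. True}" by blast
  qed
  then show ?thesis
    unfolding ED_def by (intro CollectI exI[of _ "{}"] exI[of _ "{g}"]) auto
qed

lemma finite_fst_image_in_ED:
  assumes "finite (fst ` P)"
  shows "P \<in> ED"
proof -
  have "P \<subseteq> (\<Union>n\<in>fst ` P. {n} \<times> UNIV)" by force
  with assms show ?thesis
    unfolding ED_def by (intro CollectI exI[of _ "fst ` P"] exI[of _ "{}"]) auto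
qed

definition first_occurrences :: "(nat \<Rightarrow> 'b) \<Rightarrow> nat set" where
  "first_occurrences x = {k. x k \<notin> x ` {..<k}}"

lemma inj_on_first_occurrences: "inj_on x (first_occurrences x)"
proof (rule inj_onI)
  fix j k assume "j \<in> first_occurrences x" "k \<in> first_occurrences x" and eq: "x j = x k"
  then have j: "x j \<notin> x ` {..<j}" and k: "x k \<notin> x ` {..<k}"
    unfolding first_occurrences_def by simp_all
  show "j = k"
  proof (rule ccontr)
    assume "j \<noteq> k"
    then consider "j < k" | "k < j" by linarith
    then show False
    proof cases
      case 1
      then have "x k \<in> x ` {..<k}" unfolding eq[symmetric] by simp
      with k show False ..
    next
      case 2
      then have "x j \<in> x ` {..<j}" unfolding eq by simp
      with j show False ..
    qed
  qed
qed

lemma image_first_occurrences: "x ` first_occurrences x = range x"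
proof
  show "range x \<subseteq> x ` first_occurrences x"
  proof
    fix c assume "c \<in> range x"
    then obtain k where "x k = c" by blast
    define j where "j = (LEAST j. x j = c)"
    have j: "x j = c"
      unfolding j_def using \<open>x k = c\<close> by (rule LeastI)
    have "x i \<noteq> c" if "i < j" for i
      using that unfolding j_def by (rule not_less_Least)
    then have "j \<in> first_occurrences x"
      unfolding first_occurrences_def using j by (fastforce simp: image_iff)
    with j show "c \<in> x ` first_occurrences x" by blast
  qed
qed auto

definition new_value_strategy :: "('a \<Rightarrow> 'b) \<Rightarrow> 'a list \<Rightarrow> bool" where
  "new_value_strategy a xs \<longleftrightarrow> a (last xs) \<notin> a ` set (butlast xs)"

lemma new_value_strategy_prefix:
  "new_value_strategy a (map n [0..<Suc k]) \<longleftrightarrow> k \<in> first_occurrences (a \<circ> n)"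
  unfolding new_value_strategy_def first_occurrences_def
  by (simp add: lessThan_atLeast0 image_image)

lemma new_value_strategy_wins:
  assumes I: "is_ideal I"
    and f: "\<And>A. A \<in> ED \<Longrightarrow> f -` A \<in> I"
  shows "II_winning_strategy_tallness_star I (new_value_strategy (fst \<circ> f))"
  unfolding II_winning_strategy_tallness_star_def
proof (intro allI impI)
  \<comment> \<open>The strategy wins against every play.\<close>
  fix n :: "nat \<Rightarrow> nat"
  define K where "K = first_occurrences (fst \<circ> f \<circ> n)"
  define S where "S = {n k | k. new_value_strategy (fst \<circ> f) (map n [0..<Suc k])}"
  have S: "S = n ` K"
    unfolding S_def K_def new_value_strategy_prefix by auto
  have "inj_on fst (f ` S)"
    unfolding S image_image
    by (rule inj_on_imageI) (unfold K_def comp_def, rule inj_on_first_occurrences)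
  then have "S \<in> I"
    using f[OF inj_on_fst_in_ED] is_ideal_subset[OF I] by blast
  moreover have "infinite S" if "range n \<notin> I"
  proof
    assume "finite S"
    have "fst ` f ` range n = fst ` f ` S"
      using image_first_occurrences[of "fst \<circ> f \<circ> n"]
      unfolding S K_def by (simp add: image_image)
    with \<open>finite S\<close> have "f ` range n \<in> ED"
      by (intro finite_fst_image_in_ED) simp
    then have "range n \<in> I"
      using f is_ideal_subset[OF I] by blast
    with that show False by blast
  qed
  ultimately show "tallness_star_II_wins I n
                     (\<lambda>k. new_value_strategy (fst \<circ> f) (map n [0..<Suc k]))"
    unfolding tallness_star_II_wins_def S_def by blast
qed

theorem mainTheorem16:
  fixes I :: "nat set set"
  assumes "is_ideal I"
    and "katetov_le ED I"
  shows "\<exists>\<sigma>. II_winning_strategy_tallness_star I \<sigma>"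
proof -
  obtain f :: "nat \<Rightarrow> nat \<times> nat" where "\<And>A. A \<in> ED \<Longrightarrow> f -` A \<in> I"
    using assms(2) unfolding katetov_le_def by blast
  with assms(1) show ?thesis
    by (blast intro: new_value_strategy_wins)
qed

end
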